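(* Let $(\mathcal G,p)$ be a $1$-closed CPS on the finite set $\Omega$ with $\mathcal G$ closed under unions and nonempty intersections and covering $\Omega$. For every event $E$ and state $\omega$: if $\omega\in E$ and $p_{m(\omega)}(E)=1$, then $m(\omega)\subseteq E$.
   Context: $\Omega$ is a finite set; every subset is an event. A CPS is a pair $(\mathcal G,p)$ where $\mathcal G$ is a family of nonempty subsets of $\Omega$ and $p$ assigns to each $G\in\mathcal G$ a probability measure $p_G$ on $\Omega$ with $p_G(G)=1$ and $p_G(E)=p_G(F)p_F(E)$ whenever $E\subseteq F\subseteq G$, $F,G\in\mathcal G$. Atom: $m(\omega)=\bigcap\{G\in\mathcal G:\omega\in G\}$. $(\mathcal G,p)$ is $1$-closed if every $L\subseteq G$ with $G\in\mathcal G$ and $p_G(L)=1$ belongs to $\mathcal G$. *)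

theory Defs
  imports "HOL-Probability.Probability_Mass_Function"
begin

definition cps :: "'a set \<Rightarrow> 'a set set \<Rightarrow> ('a set \<Rightarrow> 'a pmf) \<Rightarrow> bool" where
  "cps \<Omega> \<G> p \<longleftrightarrow>
     finite \<Omega> \<and>
     (\<forall>G\<in>\<G>. G \<noteq> {} \<and> G \<subseteq> \<Omega>) \<and>
     (\<forall>G\<in>\<G>. set_pmf (p G) \<subseteq> \<Omega>) \<and>
     (\<forall>G\<in>\<G>. measure_pmf.prob (p G) G = 1) \<and>
     (\<forall>E F G. E \<subseteq> F \<longrightarrow> F \<subseteq> G \<longrightarrow> F \<in> \<G> \<longrightarrow> G \<in> \<G> \<longrightarrow>
        measure_pmf.prob (p G) E = measure_pmf.prob (p G) F * measure_pmf.prob (p F) E)"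

definition atom :: "'a set set \<Rightarrow> 'a \<Rightarrow> 'a set" where
  "atom \<G> \<omega> = \<Inter>{G \<in> \<G>. \<omega> \<in> G}"

definition one_closed :: "'a set set \<Rightarrow> ('a set \<Rightarrow> 'a pmf) \<Rightarrow> bool" where
  "one_closed \<G> p \<longleftrightarrow>
     (\<forall>G\<in>\<G>. \<forall>L. L \<subseteq> G \<longrightarrow> measure_pmf.prob (p G) L = 1 \<longrightarrow> L \<in> \<G>)"

end

theory Submission
  imports Defs
begin

(* The atom m(\<omega>) is itself a conditioning event: \<G> is finite and closed under nonempty
   intersections, and all events containing \<omega> meet at \<omega>.  Hence m(\<omega>) \<inter> E carries full
   p_m(\<omega>)-probability, so it lies in \<G> by 1-closedness; as it contains \<omega>, minimality of
   the atom gives m(\<omega>) \<subseteq> m(\<omega>) \<inter> E. *)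

lemma measure_pmf_prob_Int_eq_1:
  assumes "measure_pmf.prob q A = 1" and "measure_pmf.prob q B = 1"
  shows "measure_pmf.prob q (A \<inter> B) = 1"
  using assms by (auto simp: measure_pmf.prob_eq_1 AE_measure_pmf_iff)

lemma Inter_mem_if_Int_closed:
  assumes Int_closed: "\<And>A B. A \<in> \<G> \<Longrightarrow> B \<in> \<G> \<Longrightarrow> A \<inter> B \<noteq> {} \<Longrightarrow> A \<inter> B \<in> \<G>"
    and "finite T" and "T \<noteq> {}" and "T \<subseteq> \<G>" and "\<omega> \<in> \<Inter>T"
  shows "\<Inter>T \<in> \<G>"
  using assms(2-5)
proof (induction T rule: finite_ne_induct)
  case (singleton G)
  then show ?case by simp
next
  case (insert G T)
  then have "G \<in> \<G>" "\<Inter>T \<in> \<G>" "\<omega> \<in> G \<inter> \<Inter>T" by auto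
  then show ?case using Int_closed by auto
qed

lemma atom_subset: "G \<in> \<G> \<Longrightarrow> \<omega> \<in> G \<Longrightarrow> atom \<G> \<omega> \<subseteq> G"
  unfolding atom_def by blast

lemma mem_atom: "\<omega> \<in> atom \<G> \<omega>"
  unfolding atom_def by blast

lemma atom_mem:
  assumes "finite \<G>"
    and "\<And>A B. A \<in> \<G> \<Longrightarrow> B \<in> \<G> \<Longrightarrow> A \<inter> B \<noteq> {} \<Longrightarrow> A \<inter> B \<in> \<G>"
    and "\<omega> \<in> \<Union>\<G>"
  shows "atom \<G> \<omega> \<in> \<G>"
  unfolding atom_def
  by (rule Inter_mem_if_Int_closed[where \<omega> = \<omega>]) (use assms in auto)

lemma cps_finite_family:
  assumes "cps \<Omega> \<G> p"
  shows "finite \<G>"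
proof (rule finite_subset)
  show "\<G> \<subseteq> Pow \<Omega>" using assms unfolding cps_def by auto
  show "finite (Pow \<Omega>)" using assms unfolding cps_def by simp
qed

lemma cps_prob_self:
  assumes "cps \<Omega> \<G> p" and "G \<in> \<G>"
  shows "measure_pmf.prob (p G) G = 1"
  using assms unfolding cps_def by blast

theorem lemma1:
  fixes \<Omega> :: "'a set" and \<G> :: "'a set set" and p :: "'a set \<Rightarrow> 'a pmf"
  assumes "cps \<Omega> \<G> p"
    and "one_closed \<G> p"
    and "\<And>A B. A \<in> \<G> \<Longrightarrow> B \<in> \<G> \<Longrightarrow> A \<union> B \<in> \<G>"
    and "\<And>A B. A \<in> \<G> \<Longrightarrow> B \<in> \<G> \<Longrightarrow> A \<inter> B \<noteq> {} \<Longrightarrow> A \<inter> B \<in> \<G>"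
    and "\<Union>\<G> = \<Omega>"
    and "E \<subseteq> \<Omega>" and "\<omega> \<in> E"
    and "measure_pmf.prob (p (atom \<G> \<omega>)) E = 1"
  shows "atom \<G> \<omega> \<subseteq> E"
proof -
  let ?m = "atom \<G> \<omega>"
  have m_mem: "?m \<in> \<G>"
    using atom_mem[OF cps_finite_family[OF assms(1)] assms(4)] assms(5-7) by blast
  have "measure_pmf.prob (p ?m) (?m \<inter> E) = 1"
    using measure_pmf_prob_Int_eq_1 cps_prob_self[OF assms(1) m_mem] assms(8) by blast
  then have "?m \<inter> E \<in> \<G>"
    using assms(2) m_mem unfolding one_closed_def by blast
  then have "?m \<subseteq> ?m \<inter> E"
    using atom_subset mem_atom assms(7) by (metis IntI)
  then show ?thesis by blast
qed

end
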